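(* Let $n\ge2$ be a power of 2 and $f = \mathsf{ADDR}_n$. Then $\mathsf{D}_{\mathrm{cc}}^\rightarrow(f \circ \mathsf{AND}) \geq \mathrm{rank}(M_{f \circ \mathsf{AND}})^{\log_3 2}$.
   Context: $\mathsf{ADDR}_n:\{0,1\}^{\log n+n}\to\{0,1\}$ is $\mathsf{ADDR}_n(x,y)=y_{\mathsf{bin}(x)}$ for $x\in\{0,1\}^{\log n}$, $y\in\{0,1\}^n$, where $\mathsf{bin}(x)\in[n]$ is the integer whose binary representation is $x$. For $f:\{0,1\}^m\to\{0,1\}$, $f\circ\mathsf{AND}$ is the two-party function $(u,v)\mapsto f(u_1\wedge v_1,\dots,u_m\wedge v_m)$ with Alice holding $u\in\{0,1\}^m$, Bob $v\in\{0,1\}^m$; $M_{f\circ\mathsf{AND}}$ is its communication matrix (entry $(u,v)$ equals $(f\circ\mathsf{AND})(u,v)$), $\mathrm{rank}$ is real rank, and $\mathsf{D}_{\mathrm{cc}}^\rightarrow$ is deterministic one-way communication complexity. *)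

theory Defs
  imports "HOL-Analysis.Analysis" "Jordan_Normal_Form.DL_Rank"
begin

(* bin(x): integer whose (big-endian) binary representation is x; values in {0..<2^length x},
   used as a 0-based index into y (i.e. the paper's [n] shifted by one). *)
definition bin :: "bool list \<Rightarrow> nat" where
  "bin x = foldl (\<lambda>acc b. 2 * acc + (if b then 1 else 0)) 0 x"

definition addr_len :: "nat \<Rightarrow> nat" where
  "addr_len n = nat \<lfloor>log 2 (real n)\<rfloor>"

definition ADDR :: "nat \<Rightarrow> bool list \<Rightarrow> bool" where
  "ADDR n w = (let x = take (addr_len n) w; y = drop (addr_len n) w in y ! bin x)"

definition and_compose :: "(bool list \<Rightarrow> bool) \<Rightarrow> bool list \<Rightarrow> bool list \<Rightarrow> bool" where
  "and_compose f u v = f (map2 (\<and>) u v)"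

definition to_bits :: "nat \<Rightarrow> nat \<Rightarrow> bool list" where
  "to_bits m i = map (\<lambda>j. odd (i div 2 ^ j)) [0..<m]"

definition comm_matrix :: "nat \<Rightarrow> (bool list \<Rightarrow> bool list \<Rightarrow> bool) \<Rightarrow> real mat" where
  "comm_matrix m F = mat (2 ^ m) (2 ^ m) (\<lambda>(i, j). if F (to_bits m i) (to_bits m j) then 1 else 0)"

definition real_rank :: "real mat \<Rightarrow> nat" where
  "real_rank A = vec_space.rank (dim_row A) A"

(* deterministic one-way protocol (Alice -> Bob) of cost c computing F on inputs of length m:
   Alice sends a c-bit message depending on u only, Bob outputs from message and v *)
definition oneway_protocol :: "nat \<Rightarrow> (bool list \<Rightarrow> bool list \<Rightarrow> bool) \<Rightarrow> nat \<Rightarrow> bool" where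
  "oneway_protocol m F c \<longleftrightarrow>
     (\<exists>(a :: bool list \<Rightarrow> bool list) (b :: bool list \<Rightarrow> bool list \<Rightarrow> bool).
        (\<forall>u. length u = m \<longrightarrow> length (a u) = c) \<and>
        (\<forall>u v. length u = m \<longrightarrow> length v = m \<longrightarrow> b (a u) v = F u v))"

definition D_oneway :: "nat \<Rightarrow> (bool list \<Rightarrow> bool list \<Rightarrow> bool) \<Rightarrow> nat" where
  "D_oneway m F = (LEAST c. oneway_protocol m F c)"

end

theory Submission
  imports Defs
begin

(* Write Alice's input as (x, y) and Bob's as (x', y'); the matrix entry is h (bin (x AND x'))
   with h b = y_b y'_b. On a single address bit, h (a \<and> c) = h 0 + a c (h 1 - h 0) is a sum of
   three products of a function of Alice's bit and a function of Bob's bit, so peeling off the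
   log n address bits writes the matrix as a sum of 3 ^ log n = n ^ log 2 3 rank-one matrices.
   Conversely, if Alice's address is all ones, Bob recovers any bit y_j of Alice by choosing
   address j and y' all ones, so Alice's message determines y and has at least n bits. *)

lemma bin_Nil [simp]: "bin [] = 0"
  by (simp add: bin_def)

lemma foldl_bin_acc:
  "foldl (\<lambda>acc b. 2 * acc + (if b then 1 else 0)) acc p = acc * 2 ^ length p + bin p"
  unfolding bin_def
proof (induction p arbitrary: acc)
  case (Cons b p)
  show ?case
    using Cons.IH[of "2 * acc + (if b then 1 else 0)"] Cons.IH[of "if b then 1 else 0"]
    by (simp add: algebra_simps)
qed simp

lemma bin_Cons: "bin (b # p) = (if b then 2 ^ length p else 0) + bin p"
  using foldl_bin_acc[of "if b then 1 else 0" p] by (simp add: bin_def)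

lemma bin_less: "bin p < 2 ^ length p"
  by (induction p) (simp_all add: bin_Cons)

lemma bin_surj: "j < 2 ^ k \<Longrightarrow> \<exists>p. length p = k \<and> bin p = j"
proof (induction k arbitrary: j)
  case 0
  then show ?case by simp
next
  case (Suc k)
  obtain p where "length p = k" "bin p = j mod 2 ^ k"
    using Suc.IH[of "j mod 2 ^ k"] by auto
  then have "length ((2 ^ k \<le> j) # p) = Suc k \<and> bin ((2 ^ k \<le> j) # p) = j"
    using Suc.prems by (auto simp: bin_Cons le_mod_geq)
  then show ?case by blast
qed

lemma sum_lessThan_add: "(\<Sum>t < K + (L::nat). h t) = (\<Sum>t<K. h t) + (\<Sum>t<L. h (K + t))"
  by (induction L) (simp_all add: ac_simps)

definition product_rank_le :: "nat \<Rightarrow> ('a \<Rightarrow> 'b \<Rightarrow> real) \<Rightarrow> bool" where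
  "product_rank_le K F \<longleftrightarrow> (\<exists>f g. \<forall>u v. F u v = (\<Sum>t<K. f t u * g t v))"

lemma product_rank_le_1: "product_rank_le 1 (\<lambda>u v. a u * b v)"
  unfolding product_rank_le_def by (rule exI[of _ "\<lambda>_. a"], rule exI[of _ "\<lambda>_. b"]) simp

lemma product_rank_le_add:
  assumes "product_rank_le K F" and "product_rank_le L G"
  shows "product_rank_le (K + L) (\<lambda>u v. F u v + G u v)"
proof -
  obtain f g where F: "\<And>u v. F u v = (\<Sum>t<K. f t u * g t v)"
    using assms(1) unfolding product_rank_le_def by blast
  obtain f' g' where G: "\<And>u v. G u v = (\<Sum>t<L. f' t u * g' t v)"
    using assms(2) unfolding product_rank_le_def by blast
  define f'' where "f'' t = (if t < K then f t else f' (t - K))" for t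
  define g'' where "g'' t = (if t < K then g t else g' (t - K))" for t
  have "F u v + G u v = (\<Sum>t < K + L. f'' t u * g'' t v)" for u v
    unfolding sum_lessThan_add F G f''_def g''_def by simp
  then show ?thesis
    unfolding product_rank_le_def by blast
qed

lemma product_rank_le_scale:
  assumes "product_rank_le K F"
  shows "product_rank_le K (\<lambda>u v. a u * b v * F u v)"
proof -
  obtain f g where F: "\<And>u v. F u v = (\<Sum>t<K. f t u * g t v)"
    using assms unfolding product_rank_le_def by blast
  have "a u * b v * F u v = (\<Sum>t<K. (a u * f t u) * (b v * g t v))" for u v
    unfolding F sum_distrib_left by (simp add: ac_simps)
  then show ?thesis
    unfolding product_rank_le_def
    by (intro exI[of _ "\<lambda>t u. a u * f t u"] exI[of _ "\<lambda>t v. b v * g t v"]) simp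
qed

lemma product_rank_le_compose:
  assumes "product_rank_le K F"
  shows "product_rank_le K (\<lambda>u v. F (\<phi> u) (\<psi> v))"
proof -
  obtain f g where "\<And>u v. F u v = (\<Sum>t<K. f t u * g t v)"
    using assms unfolding product_rank_le_def by blast
  then show ?thesis
    unfolding product_rank_le_def
    by (intro exI[of _ "\<lambda>t u. f t (\<phi> u)"] exI[of _ "\<lambda>t v. g t (\<psi> v)"]) simp
qed

lemma rank_mat_sum_products_le:
  fixes f g :: "nat \<Rightarrow> nat \<Rightarrow> real"
  shows "vec_space.rank N (mat N N' (\<lambda>(i, j). \<Sum>t<K. f t i * g t j)) \<le> K"
proof (induction K)
  case 0
  have "mat N N' (\<lambda>_. 0) = (0\<^sub>m N N' :: real mat)"
    by (auto simp: eq_matI)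
  then show ?case
    using vec_space.rank_0I[of N N'] by simp
next
  case (Suc K)
  define A where "A = mat N N' (\<lambda>(i, j). \<Sum>t<K. f t i * g t j)"
  define B where "B = mat N N' (\<lambda>(i, j). f K i * g K j)"
  have "mat N N' (\<lambda>(i, j). \<Sum>t<Suc K. f t i * g t j) = A + B"
    unfolding A_def B_def by (rule eq_matI) auto
  moreover have "vec_space.rank N (A + B) \<le> vec_space.rank N A + vec_space.rank N B"
    unfolding A_def B_def by (rule vec_space.rank_subadditive) auto
  moreover have "vec_space.rank N B \<le> 1"
    unfolding B_def by (rule vec_space.rank_le_1_product_entries[of _ N N' "f K" "g K"]) auto
  ultimately show ?case
    using Suc.IH unfolding A_def by simp
qed

lemma rank_mat_le_product_rank:
  fixes F :: "nat \<Rightarrow> nat \<Rightarrow> real"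
  assumes "product_rank_le K F"
  shows "vec_space.rank N (mat N N' (\<lambda>(i, j). F i j)) \<le> K"
proof -
  obtain f g where "\<And>i j. F i j = (\<Sum>t<K. f t i * g t j)"
    using assms unfolding product_rank_le_def by blast
  then show ?thesis
    using rank_mat_sum_products_le[where f = f and g = g and N = N and N' = N' and K = K] by simp
qed

(* Alice holds (p, \<alpha>) and Bob (q, \<beta>); the length guard keeps the function total, so that
   product_rank_le need not be relativised to a domain. *)
definition and_addr_prod ::
    "nat \<Rightarrow> bool list \<times> (nat \<Rightarrow> real) \<Rightarrow> bool list \<times> (nat \<Rightarrow> real) \<Rightarrow> real" where
  "and_addr_prod k = (\<lambda>(p, \<alpha>) (q, \<beta>).
     if length p = k \<and> length q = k then \<alpha> (bin (map2 (\<and>) p q)) * \<beta> (bin (map2 (\<and>) p q)) else 0)"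

lemma and_addr_prod_0:
  "and_addr_prod 0 u v = (of_bool (fst u = []) * snd u 0) * (of_bool (fst v = []) * snd v 0)"
  by (cases u; cases v) (auto simp: and_addr_prod_def)

lemma and_addr_prod_Suc:
  "and_addr_prod (Suc k) (p, \<alpha>) (q, \<beta>) =
     of_bool (length p = Suc k \<and> hd p) * of_bool (length q = Suc k \<and> hd q)
       * and_addr_prod k (tl p, \<lambda>c. \<alpha> (2 ^ k + c)) (tl q, \<lambda>c. \<beta> (2 ^ k + c))
   + of_bool (length p = Suc k) * of_bool (length q = Suc k) * and_addr_prod k (tl p, \<alpha>) (tl q, \<beta>)
   + - of_bool (length p = Suc k \<and> hd p) * of_bool (length q = Suc k \<and> hd q)
       * and_addr_prod k (tl p, \<alpha>) (tl q, \<beta>)"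
proof (cases "length p = Suc k \<and> length q = Suc k")
  case True
  then obtain a p' b q' where "p = a # p'" "q = b # q'" "length p' = k" "length q' = k"
    by (metis length_Suc_conv)
  then show ?thesis
    by (simp add: and_addr_prod_def bin_Cons)
next
  case False
  then show ?thesis
    by (auto simp: and_addr_prod_def)
qed

lemma product_rank_le_and_addr_prod: "product_rank_le (3 ^ k) (and_addr_prod k)"
proof (induction k)
  case 0
  show ?case
    unfolding and_addr_prod_0[abs_def] using product_rank_le_1 by simp
next
  case (Suc k)
  define high :: "bool list \<times> (nat \<Rightarrow> real) \<Rightarrow> bool list \<times> (nat \<Rightarrow> real)"
    where "high u = (tl (fst u), \<lambda>c. snd u (2 ^ k + c))" for u
  define low :: "bool list \<times> (nat \<Rightarrow> real) \<Rightarrow> bool list \<times> (nat \<Rightarrow> real)"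
    where "low u = (tl (fst u), snd u)" for u
  define lead :: "bool list \<times> (nat \<Rightarrow> real) \<Rightarrow> real"
    where "lead u = of_bool (length (fst u) = Suc k \<and> hd (fst u))" for u
  define full :: "bool list \<times> (nat \<Rightarrow> real) \<Rightarrow> real"
    where "full u = of_bool (length (fst u) = Suc k)" for u
  have high: "product_rank_le (3 ^ k) (\<lambda>u v. and_addr_prod k (high u) (high v))"
    and low: "product_rank_le (3 ^ k) (\<lambda>u v. and_addr_prod k (low u) (low v))"
    using Suc.IH by (rule product_rank_le_compose)+
  have "product_rank_le (3 ^ k + (3 ^ k + 3 ^ k)) (\<lambda>u v.
          lead u * lead v * and_addr_prod k (high u) (high v)
        + (full u * full v * and_addr_prod k (low u) (low v)
        + (- lead u) * lead v * and_addr_prod k (low u) (low v)))"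
    by (intro product_rank_le_add product_rank_le_scale[OF high] product_rank_le_scale[OF low])
  also have "(\<lambda>u v.
          lead u * lead v * and_addr_prod k (high u) (high v)
        + (full u * full v * and_addr_prod k (low u) (low v)
        + (- lead u) * lead v * and_addr_prod k (low u) (low v))) = and_addr_prod (Suc k)"
  proof (intro ext)
    fix u v :: "bool list \<times> (nat \<Rightarrow> real)"
    show "lead u * lead v * and_addr_prod k (high u) (high v)
        + (full u * full v * and_addr_prod k (low u) (low v)
        + (- lead u) * lead v * and_addr_prod k (low u) (low v)) = and_addr_prod (Suc k) u v"
      using and_addr_prod_Suc[of k "fst u" "snd u" "fst v" "snd v"]
      by (simp add: high_def low_def lead_def full_def)
  qed
  finally have "product_rank_le (3 ^ k + (3 ^ k + 3 ^ k)) (and_addr_prod (Suc k))" .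
  moreover have "3 ^ k + (3 ^ k + 3 ^ k) = (3::nat) ^ Suc k"
    by simp
  ultimately show ?case
    by simp
qed

lemma addr_len_power: "addr_len (2 ^ k) = k"
  unfolding addr_len_def by (simp add: log_nat_power)

lemma and_compose_ADDR:
  assumes n: "n = 2 ^ k" and "length u = k + n" and "length v = k + n"
  shows "and_compose (ADDR n) u v =
    (let b = bin (map2 (\<and>) (take k u) (take k v)) in drop k u ! b \<and> drop k v ! b)"
proof -
  have k: "addr_len n = k"
    using n addr_len_power by simp
  define b where "b = bin (map2 (\<and>) (take k u) (take k v))"
  have "b < n"
    using bin_less[of "map2 (\<and>) (take k u) (take k v)"] assms by (simp add: b_def)
  have "and_compose (ADDR n) u v = map2 (\<and>) (drop k u) (drop k v) ! b"
    unfolding and_compose_def ADDR_def k Let_def b_def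
    by (simp add: take_map take_zip drop_map drop_zip)
  also have "\<dots> = (drop k u ! b \<and> drop k v ! b)"
    using \<open>b < n\<close> assms by simp
  finally show ?thesis
    unfolding b_def Let_def .
qed

lemma of_bool_and_compose_ADDR:
  assumes "n = 2 ^ k" and "length u = k + n" and "length v = k + n"
  shows "of_bool (and_compose (ADDR n) u v) =
    and_addr_prod k (take k u, \<lambda>b. of_bool (drop k u ! b)) (take k v, \<lambda>b. of_bool (drop k v ! b))"
  using assms by (simp add: and_compose_ADDR and_addr_prod_def Let_def)

lemma real_rank_comm_matrix_and_compose_ADDR:
  assumes n: "n = 2 ^ k"
  shows "real_rank (comm_matrix (addr_len n + n) (and_compose (ADDR n))) \<le> 3 ^ k"
proof -
  define m where "m = k + n"
  define decode :: "nat \<Rightarrow> bool list \<times> (nat \<Rightarrow> real)"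
    where "decode i = (take k (to_bits m i), \<lambda>b. of_bool (drop k (to_bits m i) ! b))" for i
  have "comm_matrix m (and_compose (ADDR n)) =
      mat (2 ^ m) (2 ^ m) (\<lambda>(i, j). and_addr_prod k (decode i) (decode j))"
    unfolding comm_matrix_def
  proof (intro arg_cong[where f = "mat (2 ^ m) (2 ^ m)"] ext, clarify)
    fix i j
    have "length (to_bits m i) = k + n" and "length (to_bits m j) = k + n"
      by (simp_all add: to_bits_def m_def)
    from of_bool_and_compose_ADDR[OF n this]
    show "(if and_compose (ADDR n) (to_bits m i) (to_bits m j) then 1 else 0) =
        and_addr_prod k (decode i) (decode j)"
      by (simp add: decode_def of_bool_def)
  qed
  moreover have
    "vec_space.rank (2 ^ m) (mat (2 ^ m) (2 ^ m) (\<lambda>(i, j). and_addr_prod k (decode i) (decode j)))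
      \<le> 3 ^ k"
    by (rule rank_mat_le_product_rank[OF product_rank_le_compose[OF product_rank_le_and_addr_prod]])
  ultimately show ?thesis
    using n by (simp add: real_rank_def addr_len_power m_def)
qed

lemma oneway_protocol_self: "oneway_protocol m F m"
  unfolding oneway_protocol_def by (intro exI[of _ "\<lambda>u. u"] exI[of _ F]) simp

lemma le_D_oneway:
  assumes "\<And>c. oneway_protocol m F c \<Longrightarrow> L \<le> c"
  shows "L \<le> D_oneway m F"
  unfolding D_oneway_def using oneway_protocol_self by (rule LeastI2) (rule assms)

lemma card_bool_lists_length_eq: "card {w :: bool list. length w = n} = 2 ^ n"
  using card_lists_length_eq[of "UNIV :: bool set" n] by simp

lemma card_le_oneway_protocol:
  assumes "oneway_protocol m F c"
    and "\<And>u. u \<in> U \<Longrightarrow> length u = m"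
    and "\<And>u u'. u \<in> U \<Longrightarrow> u' \<in> U \<Longrightarrow> u \<noteq> u' \<Longrightarrow> \<exists>v. length v = m \<and> F u v \<noteq> F u' v"
  shows "card U \<le> 2 ^ c"
proof -
  obtain a :: "bool list \<Rightarrow> bool list" and b :: "bool list \<Rightarrow> bool list \<Rightarrow> bool"
    where a: "\<And>u. length u = m \<Longrightarrow> length (a u) = c"
      and ab: "\<And>u v. length u = m \<Longrightarrow> length v = m \<Longrightarrow> b (a u) v = F u v"
    using assms(1) unfolding oneway_protocol_def by blast
  have "inj_on a U"
  proof (rule inj_onI, rule ccontr)
    fix u u' assume "u \<in> U" "u' \<in> U" "a u = a u'" "u \<noteq> u'"
    then obtain v where "length v = m" "F u v \<noteq> F u' v"
      using assms(3) by blast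
    moreover have "length u = m" "length u' = m"
      using assms(2) \<open>u \<in> U\<close> \<open>u' \<in> U\<close> by auto
    ultimately show False
      using ab[of u v] ab[of u' v] \<open>a u = a u'\<close> by simp
  qed
  moreover have "a ` U \<subseteq> {w. length w = c}"
    using a assms(2) by auto
  ultimately have "card U \<le> card {w :: bool list. length w = c}"
    using finite_lists_length_eq[of "UNIV :: bool set" c] by (intro card_inj_on_le) simp_all
  then show ?thesis
    by (simp add: card_bool_lists_length_eq)
qed

lemma and_compose_ADDR_select:
  assumes n: "n = 2 ^ k" and "length y = n" and "length x = k" and "bin x < n"
  shows "and_compose (ADDR n) (replicate k True @ y) (x @ replicate n True) = y ! bin x"
proof -
  have "map2 (\<and>) (replicate k True) x = x"
    using assms(3) by (induction x arbitrary: k) auto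
  moreover have "length (replicate k True @ y) = k + n" and "length (x @ replicate n True) = k + n"
    using assms(2,3) by simp_all
  ultimately show ?thesis
    using assms(3,4) by (simp add: and_compose_ADDR[OF n] Let_def)
qed

lemma D_oneway_and_compose_ADDR_ge:
  assumes n: "n = 2 ^ k"
  shows "n \<le> D_oneway (addr_len n + n) (and_compose (ADDR n))"
proof (rule le_D_oneway)
  have k: "addr_len n = k"
    using n addr_len_power by simp
  fix c assume protocol: "oneway_protocol (addr_len n + n) (and_compose (ADDR n)) c"
  define U where "U = (\<lambda>y. replicate k True @ y) ` {y. length y = n}"
  have "card U = 2 ^ n"
    unfolding U_def by (subst card_image) (auto simp: inj_on_def card_bool_lists_length_eq)
  moreover have "card U \<le> 2 ^ c"
  proof (rule card_le_oneway_protocol[OF protocol])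
    show "length u = addr_len n + n" if "u \<in> U" for u
      using that k by (auto simp: U_def)
    fix u u' assume "u \<in> U" "u' \<in> U" "u \<noteq> u'"
    then obtain y y' where u: "u = replicate k True @ y" "u' = replicate k True @ y'"
      and y: "length y = n" "length y' = n" "y \<noteq> y'"
      unfolding U_def by auto
    then obtain j where "j < n" "y ! j \<noteq> y' ! j"
      using nth_equalityI by metis
    obtain x where x: "length x = k" "bin x = j"
      using bin_surj \<open>j < n\<close> n by blast
    have "and_compose (ADDR n) u (x @ replicate n True) = y ! j"
      and "and_compose (ADDR n) u' (x @ replicate n True) = y' ! j"
      unfolding u using and_compose_ADDR_select[OF n _ x(1)] y(1,2) x(2) \<open>j < n\<close> by simp_all
    then show "\<exists>v. length v = addr_len n + n \<and>
        and_compose (ADDR n) u v \<noteq> and_compose (ADDR n) u' v"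
      using \<open>y ! j \<noteq> y' ! j\<close> x(1) k by (intro exI[of _ "x @ replicate n True"]) simp
  qed
  ultimately show "n \<le> c"
    by simp
qed

lemma power_powr_log:
  assumes "0 < a" and "a \<noteq> 1" and "0 < b"
  shows "(a ^ k) powr log a b = b ^ k"
proof -
  have "(a ^ k) powr log a b = a powr (real k * log a b)"
    using assms by (simp add: powr_realpow[symmetric] powr_powr)
  also have "\<dots> = (a powr log a b) powr real k"
    by (simp add: powr_powr mult.commute)
  also have "\<dots> = b ^ k"
    using assms by (simp add: powr_realpow)
  finally show ?thesis .
qed

theorem corollaryA5:
  fixes n :: nat
  assumes "n \<ge> 2" and "\<exists>k. n = 2 ^ k"
  shows "real (D_oneway (addr_len n + n) (and_compose (ADDR n)))
           \<ge> real (real_rank (comm_matrix (addr_len n + n) (and_compose (ADDR n)))) powr log 3 2"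
proof -
  obtain k where n: "n = 2 ^ k"
    using assms(2) by blast
  have "real (real_rank (comm_matrix (addr_len n + n) (and_compose (ADDR n)))) powr log 3 2
      \<le> (3 ^ k) powr log 3 2"
    using real_rank_comm_matrix_and_compose_ADDR[OF n]
    by (intro powr_mono2) (auto simp flip: of_nat_le_iff)
  also have "\<dots> = real n"
    using n by (simp add: power_powr_log)
  also have "\<dots> \<le> real (D_oneway (addr_len n + n) (and_compose (ADDR n)))"
    using D_oneway_and_compose_ADDR_ge[OF n] by simp
  finally show ?thesis .
qed

end
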